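(* Let $X$ be a connected finite topological space. Then there exist a connected subspace $Y\subseteq X$ which is $T_0$ and of height at most two, a point $y\in Y$, and a surjective group homomorphism $\pi_1(Y,y)\to\pi_1(X,y)$.
   Context: A finite $T_0$-space is identified with the poset in which $a\le b$ iff $a$ lies in every open set containing $b$; its height is the maximum number of elements of a chain. *)

theory Defs
  imports "HOL-Analysis.Analysis" "HOL-Algebra.Group"
begin

definition spec_le :: "'a topology \<Rightarrow> 'a \<Rightarrow> 'a \<Rightarrow> bool" where
  "spec_le X a b \<longleftrightarrow> a \<in> topspace X \<and> b \<in> topspace X \<and>
     (\<forall>U. openin X U \<and> b \<in> U \<longrightarrow> a \<in> U)"

definition spec_chain :: "'a topology \<Rightarrow> 'a set \<Rightarrow> bool" where
  "spec_chain X C \<longleftrightarrow> C \<subseteq> topspace X \<and>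
     (\<forall>a\<in>C. \<forall>b\<in>C. spec_le X a b \<or> spec_le X b a)"

definition height_le :: "'a topology \<Rightarrow> nat \<Rightarrow> bool" where
  "height_le X n \<longleftrightarrow> (\<forall>C. spec_chain X C \<longrightarrow> finite C \<and> card C \<le> n)"

definition loopin :: "'a topology \<Rightarrow> 'a \<Rightarrow> (real \<Rightarrow> 'a) \<Rightarrow> bool" where
  "loopin X x p \<longleftrightarrow> pathin X p \<and> p 0 = x \<and> p 1 = x"

definition loop_homotopic :: "'a topology \<Rightarrow> 'a \<Rightarrow> (real \<Rightarrow> 'a) \<Rightarrow> (real \<Rightarrow> 'a) \<Rightarrow> bool" where
  "loop_homotopic X x p q \<longleftrightarrow> loopin X x p \<and> loopin X x q \<and>
     homotopic_with (\<lambda>h. h 0 = x \<and> h 1 = x) (top_of_set {0..1}) X p q"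

definition loop_class :: "'a topology \<Rightarrow> 'a \<Rightarrow> (real \<Rightarrow> 'a) \<Rightarrow> (real \<Rightarrow> 'a) set" where
  "loop_class X x p = {q. loop_homotopic X x p q}"

definition path_concat :: "(real \<Rightarrow> 'a) \<Rightarrow> (real \<Rightarrow> 'a) \<Rightarrow> real \<Rightarrow> 'a" where
  "path_concat p q t = (if t \<le> 1/2 then p (2 * t) else q (2 * t - 1))"

definition fundamental_group :: "'a topology \<Rightarrow> 'a \<Rightarrow> (real \<Rightarrow> 'a) set monoid" where
  "fundamental_group X x =
     \<lparr> carrier = {loop_class X x p | p. loopin X x p},
       mult = (\<lambda>A B. loop_class X x (path_concat (SOME p. p \<in> A) (SOME q. q \<in> B))),
       one = loop_class X x (\<lambda>t. x) \<rparr>"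

end

theory Submission
  imports Defs
begin

text \<open>
  Let \<open>E\<close> consist of one representative of each class of minimal or maximal points of the
  specialization preorder. The choice of representatives makes \<open>E\<close> a \<open>T\<^sub>0\<close> space, and a chain in
  \<open>E\<close> contains at most one minimal and one maximal point. Every point of \<open>X\<close> lies above a point
  of \<open>E\<close> and below a point of \<open>E\<close>; this makes \<open>E\<close> connected and lets every loop \<open>\<gamma>\<close> be deformed
  into \<open>E\<close>. Pointwise comparable maps into a finite space are homotopic, so once \<open>n\<close> is so large
  that \<open>\<gamma>\<close> maps each interval \<open>[k/n, (k+1)/n]\<close> below a point \<open>C k\<close> of \<open>E\<close>, we may reparametrize \<open>\<gamma>\<close>
  to run through that interval during its middle third and to rest at the grid points in between,
  raise it to \<open>C k\<close> on the middle thirds, and lower it everywhere else to points of \<open>E\<close> below the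
  grid values.
\<close>

section \<open>The specialization preorder\<close>

lemma spec_le_refl: "a \<in> topspace X \<Longrightarrow> spec_le X a a"
  by (simp add: spec_le_def)

lemma spec_le_trans: "spec_le X a b \<Longrightarrow> spec_le X b c \<Longrightarrow> spec_le X a c"
  by (simp add: spec_le_def)

lemma spec_le_topspace: "spec_le X a b \<Longrightarrow> a \<in> topspace X \<and> b \<in> topspace X"
  by (simp add: spec_le_def)

lemma spec_le_openinD: "spec_le X a b \<Longrightarrow> openin X U \<Longrightarrow> b \<in> U \<Longrightarrow> a \<in> U"
  by (simp add: spec_le_def)

lemma spec_le_subtopology:
  "a \<in> S \<Longrightarrow> b \<in> S \<Longrightarrow> spec_le (subtopology X S) a b \<longleftrightarrow> spec_le X a b"
  unfolding spec_le_def openin_subtopology by auto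

lemma openin_spec_downset:
  assumes "finite (topspace X)" "x \<in> topspace X"
  shows "openin X {z \<in> topspace X. spec_le X z x}"
proof -
  let ?N = "{U. openin X U \<and> x \<in> U}"
  have "finite ?N"
    by (rule finite_subset[of _ "Pow (topspace X)"]) (auto dest: openin_subset simp: assms)
  then have "openin X (\<Inter>?N)"
    using assms(2) by (intro openin_Inter) auto
  moreover have "\<Inter>?N = {z \<in> topspace X. spec_le X z x}"
    using assms(2) by (auto simp: spec_le_def)
  ultimately show ?thesis by simp
qed

lemma openin_down_closed:
  assumes "finite (topspace X)" "W \<subseteq> topspace X"
    and "\<And>x z. x \<in> W \<Longrightarrow> spec_le X z x \<Longrightarrow> z \<in> W"
  shows "openin X W"
proof -
  have "W = (\<Union>x\<in>W. {z \<in> topspace X. spec_le X z x})"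
    using assms by (auto intro: spec_le_refl)
  moreover have "openin X (\<Union>x\<in>W. {z \<in> topspace X. spec_le X z x})"
    using assms(1,2) by (intro openin_Union) (auto intro: openin_spec_downset)
  ultimately show ?thesis by simp
qed

lemma clopen_spec_le_iff:
  assumes "openin X T" "closedin X T" "spec_le X a b"
  shows "a \<in> T \<longleftrightarrow> b \<in> T"
proof
  show "b \<in> T \<Longrightarrow> a \<in> T"
    using spec_le_openinD[OF assms(3,1)] .
  have "openin X (topspace X - T)"
    using assms(2) by (simp add: closedin_def)
  then show "a \<in> T \<Longrightarrow> b \<in> T"
    using spec_le_openinD[OF assms(3)] spec_le_topspace[OF assms(3)] by blast
qed

lemma clopen_if_spec_le_saturated:
  assumes "finite (topspace X)" "W \<subseteq> topspace X"
    and "\<And>x z. spec_le X z x \<Longrightarrow> z \<in> W \<longleftrightarrow> x \<in> W"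
  shows "openin X W \<and> closedin X W"
proof -
  have "openin X W"
  proof (rule openin_down_closed[OF assms(1,2)])
    fix x z assume "x \<in> W" "spec_le X z x"
    then show "z \<in> W"
      using assms(3) by blast
  qed
  moreover have "openin X (topspace X - W)"
  proof (rule openin_down_closed[OF assms(1)])
    fix x z assume "x \<in> topspace X - W" and zx: "spec_le X z x"
    then show "z \<in> topspace X - W"
      using assms(3)[OF zx] spec_le_topspace[OF zx] by blast
  qed blast
  ultimately show ?thesis
    using assms(2) by (simp add: closedin_def)
qed

lemma t0_space_iff_spec_le_antisym:
  "t0_space X \<longleftrightarrow> (\<forall>a b. spec_le X a b \<longrightarrow> spec_le X b a \<longrightarrow> a = b)"
proof (intro iffI allI impI)
  fix a b assume "t0_space X" and ab: "spec_le X a b" and ba: "spec_le X b a"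
  show "a = b"
  proof (rule ccontr)
    assume "a \<noteq> b"
    then obtain U where U: "openin X U" and sep: "a \<notin> U \<longleftrightarrow> b \<in> U"
      using \<open>t0_space X\<close> spec_le_topspace[OF ab] unfolding t0_space_def by blast
    show False
      using spec_le_openinD[OF ab U] spec_le_openinD[OF ba U] sep by blast
  qed
next
  assume antisym: "\<forall>a b. spec_le X a b \<longrightarrow> spec_le X b a \<longrightarrow> a = b"
  show "t0_space X"
    unfolding t0_space_def
  proof (intro ballI impI)
    fix a b assume a: "a \<in> topspace X" and b: "b \<in> topspace X" and "a \<noteq> b"
    then consider "\<not> spec_le X a b" | "\<not> spec_le X b a"
      using antisym by blast
    then show "\<exists>U. openin X U \<and> (a \<notin> U \<longleftrightarrow> b \<in> U)"
    proof cases
      case 1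
      then obtain U where "openin X U" "b \<in> U" "a \<notin> U"
        using a b unfolding spec_le_def by blast
      then show ?thesis
        by blast
    next
      case 2
      then obtain U where "openin X U" "a \<in> U" "b \<notin> U"
        using a b unfolding spec_le_def by blast
      then show ?thesis
        by blast
    qed
  qed
qed

lemma continuous_map_into_finite_space_iff:
  fixes S :: "'b::metric_space set"
  assumes "finite (topspace X)"
  shows "continuous_map (top_of_set S) X f \<longleftrightarrow>
    (\<forall>t\<in>S. f t \<in> topspace X \<and> (\<exists>e>0. \<forall>s\<in>S. dist s t < e \<longrightarrow> spec_le X (f s) (f t)))"
proof (intro iffI ballI conjI)
  fix t assume f: "continuous_map (top_of_set S) X f" and t: "t \<in> S"
  then show ft: "f t \<in> topspace X"
    by (auto simp: continuous_map_def)
  have "openin (top_of_set S) {s \<in> topspace (top_of_set S). f s \<in> {z \<in> topspace X. spec_le X z (f t)}}"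
    using f openin_spec_downset[OF assms ft] unfolding continuous_map_def by blast
  then have "openin (top_of_set S) {s \<in> S. spec_le X (f s) (f t)}"
    by (simp add: spec_le_def)
  moreover have "t \<in> {s \<in> S. spec_le X (f s) (f t)}"
    using t ft by (simp add: spec_le_refl)
  ultimately show "\<exists>e>0. \<forall>s\<in>S. dist s t < e \<longrightarrow> spec_le X (f s) (f t)"
    unfolding openin_euclidean_subtopology_iff by blast
next
  assume loc: "\<forall>t\<in>S. f t \<in> topspace X \<and> (\<exists>e>0. \<forall>s\<in>S. dist s t < e \<longrightarrow> spec_le X (f s) (f t))"
  show "continuous_map (top_of_set S) X f"
    unfolding continuous_map_def
  proof (intro conjI allI impI)
    show "f \<in> topspace (top_of_set S) \<rightarrow> topspace X"
      using loc by auto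
    fix U assume U: "openin X U"
    show "openin (top_of_set S) {t \<in> topspace (top_of_set S). f t \<in> U}"
      unfolding openin_euclidean_subtopology_iff
    proof (intro conjI ballI)
      fix t assume t: "t \<in> {t \<in> topspace (top_of_set S). f t \<in> U}"
      then obtain e where e: "e > 0" "\<And>s. s \<in> S \<Longrightarrow> dist s t < e \<Longrightarrow> spec_le X (f s) (f t)"
        using loc by auto
      have "f s \<in> U" if "s \<in> S" "dist s t < e" for s
        using spec_le_openinD[OF e(2)[OF that] U] t by simp
      then show "\<exists>e>0. \<forall>s\<in>S. dist s t < e \<longrightarrow> s \<in> {t \<in> topspace (top_of_set S). f t \<in> U}"
        using e(1) by auto
    qed auto
  qed
qed

lemma continuous_map_switch_spec_le:
  assumes f: "continuous_map T X f" and g: "continuous_map T X g"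
    and fg: "\<And>t. t \<in> topspace T \<Longrightarrow> spec_le X (f t) (g t)"
  shows "continuous_map (prod_topology (top_of_set {0..1::real}) T) X (\<lambda>(s, t). if s < 1 then f t else g t)"
    (is "continuous_map ?S X ?h")
  unfolding continuous_map_def
proof (intro conjI allI impI)
  show "?h \<in> topspace ?S \<rightarrow> topspace X"
    using f g by (auto simp: continuous_map_def)
  fix U assume U: "openin X U"
  have fgU: "f t \<in> U" if "t \<in> topspace T" "g t \<in> U" for t
    using fg[OF that(1)] U that(2) by (rule spec_le_openinD)
  have "{z \<in> topspace ?S. ?h z \<in> U} =
      {0..<1} \<times> {t \<in> topspace T. f t \<in> U} \<union> {0..1} \<times> {t \<in> topspace T. g t \<in> U}"
    (is "?L = ?R")
  proof (intro equalityI subsetI)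
    fix z assume "z \<in> ?L"
    then obtain s t where "z = (s, t)" "s \<in> {0..1}" "t \<in> topspace T" "?h (s, t) \<in> U"
      by auto
    then show "z \<in> ?R"
      by (cases "s < 1") simp_all
  next
    fix z assume "z \<in> ?R"
    then obtain s t where "z = (s, t)" "s \<in> {0..1}" "t \<in> topspace T" "f t \<in> U \<and> s < 1 \<or> g t \<in> U"
      by auto
    then show "z \<in> ?L"
      using fgU by (cases "s < 1") auto
  qed
  moreover have "openin (top_of_set {0..1}) {0..<1::real}"
    unfolding openin_open by (intro exI[of _ "{..<1}"]) auto
  moreover have "openin T {t \<in> topspace T. f t \<in> U}" "openin T {t \<in> topspace T. g t \<in> U}"
    using U f g by (simp_all add: continuous_map_def)
  ultimately show "openin ?S {z \<in> topspace ?S. ?h z \<in> U}"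
    by (simp add: openin_Un openin_prod_Times_iff)
qed

lemma homotopic_with_spec_le:
  assumes "continuous_map T X f" "continuous_map T X g"
    and "\<And>t. t \<in> topspace T \<Longrightarrow> spec_le X (f t) (g t)"
    and "P f" "P g"
  shows "homotopic_with P T X f g"
  unfolding homotopic_with_def
proof (intro exI conjI)
  show "continuous_map (prod_topology (top_of_set {0..1::real}) T) X (\<lambda>(s, t). if s < 1 then f t else g t)"
    using assms(1-3) by (rule continuous_map_switch_spec_le)
  show "\<forall>s\<in>{0..1::real}. P (\<lambda>t. (\<lambda>(s, t). if s < 1 then f t else g t) (s, t))"
  proof
    fix s :: real
    show "P (\<lambda>t. (\<lambda>(s, t). if s < 1 then f t else g t) (s, t))"
      using assms(4,5) by (cases "s < 1") simp_all
  qed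
qed simp_all

section \<open>Loops and the homomorphism induced by an inclusion\<close>

lemma loop_homotopic_refl: "loopin X x p \<Longrightarrow> loop_homotopic X x p p"
  by (auto simp: loop_homotopic_def loopin_def pathin_def)

lemma loop_homotopic_sym: "loop_homotopic X x p q \<Longrightarrow> loop_homotopic X x q p"
  by (auto simp: loop_homotopic_def intro: homotopic_with_symD)

lemma loop_homotopic_trans:
  "loop_homotopic X x p q \<Longrightarrow> loop_homotopic X x q r \<Longrightarrow> loop_homotopic X x p r"
  by (auto simp: loop_homotopic_def intro: homotopic_with_trans)

lemma loop_class_eq: "loop_homotopic X x p q \<Longrightarrow> loop_class X x p = loop_class X x q"
  unfolding loop_class_def by (auto intro: loop_homotopic_trans loop_homotopic_sym)

lemma loop_homotopic_some_loop_class: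
  assumes "loopin X x p"
  shows "loop_homotopic X x p (SOME q. q \<in> loop_class X x p)"
  unfolding loop_class_def mem_Collect_eq by (rule someI[of _ p]) (rule loop_homotopic_refl[OF assms])

lemma loopin_subtopology:
  "loopin (subtopology X S) x p \<longleftrightarrow> loopin X x p \<and> (\<forall>t\<in>{0..1}. p t \<in> S)"
  by (auto simp: loopin_def pathin_subtopology)

lemma loop_homotopic_subtopology:
  assumes "loop_homotopic (subtopology X S) x p q"
  shows "loop_homotopic X x p q"
proof -
  have "homotopic_with (\<lambda>h. h 0 = x \<and> h 1 = x) (top_of_set {0..1}) (subtopology X S) p q"
    using assms by (simp add: loop_homotopic_def)
  then have "homotopic_with (\<lambda>h. h 0 = x \<and> h 1 = x) (top_of_set {0..1}) X (id \<circ> p) (id \<circ> q)"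
    by (rule homotopic_with_compose_continuous_map_left)
       (simp_all add: continuous_map_from_subtopology)
  then show ?thesis
    using assms by (simp add: loop_homotopic_def loopin_subtopology)
qed

lemma continuous_map_concat_homotopy:
  fixes k1 k2 :: "real \<times> real \<Rightarrow> 'a"
  defines "I \<equiv> top_of_set {0..1::real}"
  assumes k1: "continuous_map (prod_topology I I) X k1" and k2: "continuous_map (prod_topology I I) X k2"
    and glue: "\<And>s. s \<in> {0..1} \<Longrightarrow> k1 (s, 1) = k2 (s, 0)"
  shows "continuous_map (prod_topology I I) X
    (\<lambda>z. if snd z \<le> 1/2 then k1 (fst z, 2 * snd z) else k2 (fst z, 2 * snd z - 1))"
proof (rule continuous_map_cases_le)
  show snd: "continuous_map (prod_topology I I) euclideanreal snd"
    unfolding I_def using continuous_map_snd continuous_map_in_subtopology by blast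
  show "continuous_map (subtopology (prod_topology I I) {z \<in> topspace (prod_topology I I). snd z \<le> 1/2}) X
      (\<lambda>z. k1 (fst z, 2 * snd z))"
    unfolding I_def
    by (intro snd[unfolded I_def] continuous_map_compose[OF _ k1[unfolded I_def], unfolded o_def]
        continuous_intros continuous_map_into_subtopology continuous_map_from_subtopology | simp)+
      (force simp: prod_topology_subtopology)
  show "continuous_map (subtopology (prod_topology I I) {z \<in> topspace (prod_topology I I). 1/2 \<le> snd z}) X
      (\<lambda>z. k2 (fst z, 2 * snd z - 1))"
    unfolding I_def
    by (intro snd[unfolded I_def] continuous_map_compose[OF _ k2[unfolded I_def], unfolded o_def]
        continuous_intros continuous_map_into_subtopology continuous_map_from_subtopology | simp)+
      (force simp: prod_topology_subtopology)
  show "k1 (fst z, 2 * snd z) = k2 (fst z, 2 * snd z - 1)"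
    if "z \<in> topspace (prod_topology I I)" "snd z = 1/2" for z
  proof -
    have "fst z \<in> {0..1}"
      using that(1) by (auto simp: I_def mem_Times_iff)
    moreover have "2 * snd z = 1"
      using that(2) by simp
    ultimately show ?thesis
      using glue by simp
  qed
qed simp

lemma loop_homotopic_concat:
  assumes "loop_homotopic X x p p'" "loop_homotopic X x q q'"
  shows "loop_homotopic X x (path_concat p q) (path_concat p' q')"
proof -
  let ?I = "top_of_set {0..1::real}"
  obtain k1 where k1: "continuous_map (prod_topology ?I ?I) X k1"
    "\<forall>t. k1 (0, t) = p t" "\<forall>t. k1 (1, t) = p' t" "\<forall>s\<in>{0..1}. k1 (s, 0) = x \<and> k1 (s, 1) = x"
    using assms(1) unfolding loop_homotopic_def homotopic_with_def by auto
  obtain k2 where k2: "continuous_map (prod_topology ?I ?I) X k2"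
    "\<forall>t. k2 (0, t) = q t" "\<forall>t. k2 (1, t) = q' t" "\<forall>s\<in>{0..1}. k2 (s, 0) = x \<and> k2 (s, 1) = x"
    using assms(2) unfolding loop_homotopic_def homotopic_with_def by auto
  let ?k = "\<lambda>z. if snd z \<le> 1/2 then k1 (fst z, 2 * snd z) else k2 (fst z, 2 * snd z - 1)"
  have "continuous_map (prod_topology ?I ?I) X ?k"
    using k1(1) k2(1) k1(4) k2(4) by (intro continuous_map_concat_homotopy) simp_all
  then have hom: "homotopic_with (\<lambda>h. h 0 = x \<and> h 1 = x) ?I X (path_concat p q) (path_concat p' q')"
    unfolding homotopic_with_def using k1 k2
    by (intro exI[of _ ?k]) (simp add: path_concat_def)
  moreover have "p 0 = x" "q 1 = x" "p' 0 = x" "q' 1 = x"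
    using assms by (auto simp: loop_homotopic_def loopin_def)
  ultimately show ?thesis
    using homotopic_with_imp_continuous_maps[OF hom]
    by (simp add: loop_homotopic_def loopin_def pathin_def path_concat_def)
qed

lemma loopin_concat:
  assumes "loopin X x p" "loopin X x q"
  shows "loopin X x (path_concat p q)"
  using loop_homotopic_concat[OF loop_homotopic_refl[OF assms(1)] loop_homotopic_refl[OF assms(2)]]
  by (simp add: loop_homotopic_def)

lemma fundamental_group_mult_loop_class:
  assumes "loopin X x p" "loopin X x q"
  shows "mult (fundamental_group X x) (loop_class X x p) (loop_class X x q) =
    loop_class X x (path_concat p q)"
  using loop_class_eq[OF loop_homotopic_concat[OF loop_homotopic_some_loop_class[OF assms(1)]
      loop_homotopic_some_loop_class[OF assms(2)]]]
  by (simp add: fundamental_group_def)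

definition induced_inclusion :: "'a topology \<Rightarrow> 'a \<Rightarrow> (real \<Rightarrow> 'a) set \<Rightarrow> (real \<Rightarrow> 'a) set" where
  "induced_inclusion X x A = loop_class X x (SOME p. p \<in> A)"

lemma induced_inclusion_loop_class:
  assumes "loopin (subtopology X S) x p"
  shows "induced_inclusion X x (loop_class (subtopology X S) x p) = loop_class X x p"
  unfolding induced_inclusion_def
  by (rule sym, rule loop_class_eq, rule loop_homotopic_subtopology,
      rule loop_homotopic_some_loop_class[OF assms])

lemma induced_inclusion_hom:
  "induced_inclusion X x \<in> hom (fundamental_group (subtopology X S) x) (fundamental_group X x)"
proof (rule homI)
  fix A assume "A \<in> carrier (fundamental_group (subtopology X S) x)"
  then obtain p where "loopin (subtopology X S) x p" "A = loop_class (subtopology X S) x p"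
    by (auto simp: fundamental_group_def)
  then show "induced_inclusion X x A \<in> carrier (fundamental_group X x)"
    by (auto simp: fundamental_group_def induced_inclusion_loop_class loopin_subtopology)
next
  fix A B
  assume "A \<in> carrier (fundamental_group (subtopology X S) x)"
    and "B \<in> carrier (fundamental_group (subtopology X S) x)"
  then obtain p q where p: "loopin (subtopology X S) x p" "A = loop_class (subtopology X S) x p"
    and q: "loopin (subtopology X S) x q" "B = loop_class (subtopology X S) x q"
    by (auto simp: fundamental_group_def)
  then have "loopin X x p" "loopin X x q"
    by (simp_all add: loopin_subtopology)
  then show "induced_inclusion X x (A \<otimes>\<^bsub>fundamental_group (subtopology X S) x\<^esub> B) =
      induced_inclusion X x A \<otimes>\<^bsub>fundamental_group X x\<^esub> induced_inclusion X x B"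
    using p q by (simp add: fundamental_group_mult_loop_class induced_inclusion_loop_class loopin_concat)
qed

lemma induced_inclusion_surjective:
  assumes "\<And>p. loopin X x p \<Longrightarrow> \<exists>q. loopin (subtopology X S) x q \<and> loop_homotopic X x p q"
  shows "induced_inclusion X x ` carrier (fundamental_group (subtopology X S) x) =
    carrier (fundamental_group X x)"
proof
  show "induced_inclusion X x ` carrier (fundamental_group (subtopology X S) x)
      \<subseteq> carrier (fundamental_group X x)"
    using induced_inclusion_hom[of X x S] unfolding hom_def by blast
next
  show "carrier (fundamental_group X x)
      \<subseteq> induced_inclusion X x ` carrier (fundamental_group (subtopology X S) x)"
  proof
    fix A assume "A \<in> carrier (fundamental_group X x)"
    then obtain p where p: "loopin X x p" "A = loop_class X x p"
      by (auto simp: fundamental_group_def)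
    then obtain q where q: "loopin (subtopology X S) x q" "loop_homotopic X x p q"
      using assms by blast
    then have "A = induced_inclusion X x (loop_class (subtopology X S) x q)"
      using p by (simp add: loop_class_eq induced_inclusion_loop_class)
    then show "A \<in> induced_inclusion X x ` carrier (fundamental_group (subtopology X S) x)"
      using q(1) by (auto simp: fundamental_group_def)
  qed
qed

section \<open>Connectedness of coinitial and cofinal subspaces\<close>

lemma clopen_in_subtopology_extend:
  assumes fin: "finite (topspace X)"
    and below: "\<And>x. x \<in> topspace X \<Longrightarrow> \<exists>a\<in>Y. spec_le X a x"
    and above: "\<And>x. x \<in> topspace X \<Longrightarrow> \<exists>m\<in>Y. spec_le X x m"
    and T: "openin (subtopology X Y) T" "closedin (subtopology X Y) T"
  obtains W where "openin X W" "closedin X W" "T = W \<inter> Y"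
proof -
  have agree: "a \<in> T \<longleftrightarrow> b \<in> T" if "a \<in> Y" "b \<in> Y" "spec_le X a b" for a b
    using T clopen_spec_le_iff[of "subtopology X Y" T a b] that
    unfolding spec_le_subtopology[OF that(1,2)] by blast
  define W where "W = {x \<in> topspace X. \<exists>m\<in>Y. spec_le X x m \<and> m \<in> T}"
  \<comment> \<open>all points of \<open>Y\<close> above \<open>x\<close> are linked to the witness in \<open>T\<close> through a point of \<open>Y\<close> below \<open>x\<close>\<close>
  have W_above: "m \<in> T" if "x \<in> W" "m \<in> Y" "spec_le X x m" for x m
  proof -
    obtain m' where m': "m' \<in> Y" "spec_le X x m'" "m' \<in> T"
      using \<open>x \<in> W\<close> unfolding W_def by blast
    obtain a where a: "a \<in> Y" "spec_le X a x"
      using below \<open>x \<in> W\<close> unfolding W_def by blast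
    have "a \<in> T"
      using agree[OF a(1) m'(1) spec_le_trans[OF a(2) m'(2)]] m'(3) by blast
    then show "m \<in> T"
      using agree[OF a(1) that(2) spec_le_trans[OF a(2) that(3)]] by blast
  qed
  have "z \<in> W \<longleftrightarrow> x \<in> W" if zx: "spec_le X z x" for x z
  proof
    assume "z \<in> W"
    obtain m where "m \<in> Y" "spec_le X x m"
      using above spec_le_topspace[OF zx] by blast
    then show "x \<in> W"
      using W_above[OF \<open>z \<in> W\<close>] spec_le_trans[OF zx] spec_le_topspace[OF zx] unfolding W_def by blast
  next
    assume "x \<in> W"
    then show "z \<in> W"
      using spec_le_trans[OF zx] spec_le_topspace[OF zx] unfolding W_def by blast
  qed
  then have "openin X W \<and> closedin X W"
    using fin by (intro clopen_if_spec_le_saturated) (auto simp: W_def)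
  moreover have "T = W \<inter> Y"
  proof (intro equalityI subsetI)
    fix a assume a: "a \<in> T"
    moreover have "T \<subseteq> topspace X \<inter> Y"
      using T openin_subset by fastforce
    ultimately have "a \<in> topspace X" "a \<in> Y"
      by blast+
    then show "a \<in> W \<inter> Y"
      using a spec_le_refl[of a X] unfolding W_def by blast
  next
    fix x assume "x \<in> W \<inter> Y"
    then show "x \<in> T"
      using W_above[of x x] spec_le_refl[of x X] unfolding W_def by blast
  qed
  ultimately show thesis
    using that by blast
qed

lemma connected_space_subtopology_coinitial_cofinal:
  assumes fin: "finite (topspace X)" and conn: "connected_space X"
    and below: "\<And>x. x \<in> topspace X \<Longrightarrow> \<exists>a\<in>Y. spec_le X a x"
    and above: "\<And>x. x \<in> topspace X \<Longrightarrow> \<exists>m\<in>Y. spec_le X x m"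
  shows "connected_space (subtopology X Y)"
  unfolding connected_space_clopen_in
proof (intro allI impI)
  fix T assume "openin (subtopology X Y) T \<and> closedin (subtopology X Y) T"
  then obtain W where "openin X W" "closedin X W" and T: "T = W \<inter> Y"
    using clopen_in_subtopology_extend[OF fin below above] by blast
  then have "W = {} \<or> W = topspace X"
    using conn unfolding connected_space_clopen_in by blast
  then show "T = {} \<or> T = topspace (subtopology X Y)"
    using T by auto
qed

section \<open>Deforming loops into coinitial and cofinal subspaces\<close>

lemma homotopic_with_reparametrize:
  assumes p: "pathin X p" and phi: "continuous_on {0..1} \<phi>" "\<phi> ` {0..1} \<subseteq> {0..1}"
    and phi01: "\<phi> 0 = 0" "\<phi> 1 = 1"
  shows "homotopic_with (\<lambda>h. h 0 = p 0 \<and> h 1 = p 1) (top_of_set {0..1}) X p (p \<circ> \<phi>)"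
proof -
  define r where "r z = (1 - fst z) * snd z + fst z * \<phi> (snd z)" for z :: "real \<times> real"
  have "continuous_on ({0..1} \<times> {0..1}) r"
    unfolding r_def
    by (intro continuous_intros continuous_on_compose2[OF phi(1)]) auto
  moreover have "r (u, t) \<in> {0..1}" if "u \<in> {0..1}" "t \<in> {0..1}" for u t
  proof -
    have "\<phi> t \<in> {0..1}"
      using that phi(2) by blast
    then show ?thesis
      using that unfolding r_def by (auto intro!: convex_bound_le add_nonneg_nonneg)
  qed
  ultimately have "continuous_map (prod_topology (top_of_set {0..1}) (top_of_set {0..1})) (top_of_set {0..1}) r"
    by (auto simp: continuous_map_in_subtopology)
  then have "continuous_map (prod_topology (top_of_set {0..1}) (top_of_set {0..1})) X (p \<circ> r)"
    using p unfolding pathin_def by (rule continuous_map_compose)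
  moreover have "(p \<circ> r) (0, t) = p t" "(p \<circ> r) (1, t) = (p \<circ> \<phi>) t" for t
    by (simp_all add: r_def)
  moreover have "(p \<circ> r) (u, 0) = p 0" "(p \<circ> r) (u, 1) = p 1" for u
    by (simp_all add: r_def phi01)
  ultimately show ?thesis
    unfolding homotopic_with_def by (intro exI[of _ "p \<circ> r"]) auto
qed

lemma grid_interval_subset:
  assumes "k < n"
  shows "{real k / n..(real k + 1) / n} \<subseteq> {0..1}"
proof -
  have "real (Suc k) \<le> real n"
    using assms by (simp only: of_nat_le_iff Suc_le_eq)
  then have "(real k + 1) / n \<le> 1"
    using assms by (simp add: divide_le_eq_1)
  moreover have "0 \<le> real k / n"
    by simp
  ultimately show ?thesis
    by auto
qed

lemma grid_refines_open_cover:
  assumes cover: "{0..1} \<subseteq> \<Union>\<B>" and "\<And>B. B \<in> \<B> \<Longrightarrow> open B"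
  shows "\<exists>n::nat>0. \<forall>k<n. \<exists>B\<in>\<B>. {real k / n..(real k + 1) / n} \<subseteq> B"
proof -
  have "\<B> \<noteq> {}"
    using cover by auto
  then obtain \<delta> where "\<delta> > 0"
    and \<delta>: "\<And>T. T \<subseteq> {0..1} \<Longrightarrow> diameter T < \<delta> \<Longrightarrow> \<exists>B\<in>\<B>. T \<subseteq> B"
    using Lebesgue_number_lemma[OF compact_Icc _ cover] assms(2) by blast
  obtain n :: nat where n: "n > 0" "inverse n < \<delta>"
    using ex_inverse_of_nat_less[OF \<open>\<delta> > 0\<close>] by blast
  have "\<exists>B\<in>\<B>. {real k / n..(real k + 1) / n} \<subseteq> B" if "k < n" for k
  proof -
    have "diameter {real k / n..(real k + 1) / n} = inverse n"
      using n(1) by (simp add: field_simps)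
    then show ?thesis
      using \<delta>[OF grid_interval_subset[OF that]] n(2) by auto
  qed
  with n(1) show ?thesis
    by blast
qed

lemma finite_space_path_grid:
  assumes fin: "finite (topspace X)" and p: "pathin X p"
    and above: "\<And>x. x \<in> topspace X \<Longrightarrow> \<exists>m\<in>Y. spec_le X x m"
  obtains n :: nat where "n > 0"
    "\<And>k. k < n \<Longrightarrow> \<exists>m\<in>Y. \<forall>s\<in>{real k / n..(real k + 1) / n}. spec_le X (p s) m"
proof -
  have loc: "\<forall>t\<in>{0..1}. p t \<in> topspace X \<and> (\<exists>e>0. \<forall>s\<in>{0..1}. dist s t < e \<longrightarrow> spec_le X (p s) (p t))"
    using p unfolding pathin_def continuous_map_into_finite_space_iff[OF fin] .
  define \<B> where "\<B> = {ball t e | t e. t \<in> {0..1::real} \<and>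
      (\<forall>s\<in>{0..1}. dist s t < e \<longrightarrow> spec_le X (p s) (p t))}"
  have "{0..1} \<subseteq> \<Union>\<B>"
  proof
    fix t :: real assume t: "t \<in> {0..1}"
    then obtain e where "e > 0" "\<forall>s\<in>{0..1}. dist s t < e \<longrightarrow> spec_le X (p s) (p t)"
      using loc by blast
    then have "ball t e \<in> \<B>" "t \<in> ball t e"
      using t unfolding \<B>_def by auto
    then show "t \<in> \<Union>\<B>"
      by blast
  qed
  moreover have "\<And>B. B \<in> \<B> \<Longrightarrow> open B"
    unfolding \<B>_def by auto
  ultimately have "\<exists>n::nat>0. \<forall>k<n. \<exists>B\<in>\<B>. {real k / n..(real k + 1) / n} \<subseteq> B"
    by (rule grid_refines_open_cover)
  then obtain n :: nat where n: "n > 0"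
    and grid: "\<And>k. k < n \<Longrightarrow> \<exists>B\<in>\<B>. {real k / n..(real k + 1) / n} \<subseteq> B"
    by blast
  have "\<exists>m\<in>Y. \<forall>s\<in>{real k / n..(real k + 1) / n}. spec_le X (p s) m" if k: "k < n" for k
  proof -
    obtain t e where t: "t \<in> {0..1}" and "{real k / n..(real k + 1) / n} \<subseteq> ball t e"
      and "\<forall>s\<in>{0..1}. dist s t < e \<longrightarrow> spec_le X (p s) (p t)"
      using grid[OF k] unfolding \<B>_def by blast
    then have le: "\<forall>s\<in>{real k / n..(real k + 1) / n}. spec_le X (p s) (p t)"
      using grid_interval_subset[OF k] by (auto simp: dist_commute subset_iff)
    obtain m where "m \<in> Y" and m: "spec_le X (p t) m"
      using above loc t by blast
    then show ?thesis
      using le spec_le_trans[OF _ m] by blast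
  qed
  with n(1) show thesis
    by (rule that)
qed

text \<open>\<open>squash n\<close> maps the middle third of each grid interval \<open>[k/n, (k+1)/n]\<close> linearly onto that
  interval and is constant \<open>k/n\<close> between consecutive middle thirds: the \<open>j\<close>-th summand ramps from
  0 to 1 across the \<open>j\<close>-th middle third.\<close>
definition squash :: "nat \<Rightarrow> real \<Rightarrow> real" where
  "squash n t = (\<Sum>j<n. max 0 (min 1 (3 * real n * t - 3 * real j - 1))) / real n"

lemma sum_lessThan_indicator: "k \<le> n \<Longrightarrow> (\<Sum>j<n. if j < k then 1 else 0 :: real) = real k"
proof -
  assume "k \<le> n"
  then have "{j \<in> {..<n}. j < k} = {..<k}"
    by auto
  then show ?thesis
    using sum.inter_filter[of "{..<n}" "\<lambda>_. 1 :: real" "\<lambda>j. j < k"] by simp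
qed

lemma squash_bounds: "0 \<le> squash n t" "squash n t \<le> 1"
proof -
  have "(\<Sum>j<n. max 0 (min 1 (3 * real n * t - 3 * real j - 1))) \<le> (\<Sum>j<n. 1)"
    by (intro sum_mono) simp
  then show "0 \<le> squash n t" "squash n t \<le> 1"
    unfolding squash_def by (auto intro!: sum_nonneg divide_nonneg_nonneg simp: divide_le_eq_1)
qed

lemma continuous_on_squash: "continuous_on A (squash n)"
  unfolding squash_def divide_inverse by (intro continuous_intros)

lemma squash_in_grid_interval:
  assumes "k < n" "real k \<le> real n * t" "real n * t \<le> real k + 1"
  shows "squash n t \<in> {real k / n..(real k + 1) / n}"
proof -
  let ?c = "\<lambda>j. max 0 (min 1 (3 * real n * t - 3 * real j - 1))"
  have "(\<Sum>j<n. if j < k then 1 else 0) \<le> (\<Sum>j<n. ?c j)"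
    using assms by (intro sum_mono) auto
  moreover have "(\<Sum>j<n. ?c j) \<le> (\<Sum>j<n. if j < Suc k then 1 else 0)"
    using assms by (intro sum_mono) auto
  ultimately have "real k \<le> (\<Sum>j<n. ?c j)" "(\<Sum>j<n. ?c j) \<le> real k + 1"
    using assms(1) by (simp_all add: sum_lessThan_indicator)
  then show ?thesis
    using assms(1) by (simp add: squash_def divide_right_mono)
qed

lemma squash_gap:
  assumes "k \<le> n" "3 * real k - 1 < 3 * real n * t" "3 * real n * t < 3 * real k + 1"
  shows "squash n t = k / n"
proof -
  let ?c = "\<lambda>j. max 0 (min 1 (3 * real n * t - 3 * real j - 1))"
  have "(\<Sum>j<n. ?c j) = (\<Sum>j<n. if j < k then 1 else 0)"
    using assms by (intro sum.cong) auto
  then show ?thesis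
    using assms(1) by (simp add: squash_def sum_lessThan_indicator)
qed

lemma squash_0: "squash n 0 = 0"
  using squash_gap[of 0 n 0] by simp

lemma squash_1: "n > 0 \<Longrightarrow> squash n 1 = 1"
  using squash_gap[of n n 1] by simp

lemma nat_eq_of_abs_diff_less_one: "\<bar>real j - real k\<bar> < 1 \<Longrightarrow> j = k"
  by (cases j k rule: linorder_cases) auto

definition on_plateau :: "nat \<Rightarrow> real \<Rightarrow> bool" where
  "on_plateau n t \<longleftrightarrow> (\<exists>k<n. 3 * real k + 1 \<le> 3 * real n * t \<and> 3 * real n * t \<le> 3 * real k + 2)"

lemma off_plateau_gap:
  assumes "t \<in> {0..1}" "\<not> on_plateau n t"
  obtains k where "k \<le> n" "3 * real k - 1 < 3 * real n * t" "3 * real n * t < 3 * real k + 1"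
proof -
  define k where "k = nat \<lfloor>real n * t + 1/3\<rfloor>"
  have nt: "0 \<le> real n * t" "real n * t \<le> real n"
    using assms(1) by (auto simp: mult_left_le)
  then have k: "real k \<le> real n * t + 1/3" "real n * t + 1/3 < real k + 1"
    unfolding k_def by linarith+
  then have "k \<le> n"
    using nt by linarith
  moreover have neq: "3 * real k - 1 \<noteq> 3 * real n * t"
  proof
    assume eq: "3 * real k - 1 = 3 * real n * t"
    then have "k \<ge> 1" "k - 1 < n"
      using nt \<open>k \<le> n\<close> by linarith+
    then have "on_plateau n t"
      unfolding on_plateau_def using eq by (intro exI[of _ "k - 1"]) (auto simp: of_nat_diff)
    then show False
      using assms(2) by blast
  qed
  moreover have "3 * real n * t < 3 * real k + 1"
  proof (rule ccontr)
    assume "\<not> 3 * real n * t < 3 * real k + 1"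
    then have le: "3 * real k + 1 \<le> 3 * real n * t"
      by simp
    then have "k < n"
      using nt by linarith
    then have "on_plateau n t"
      unfolding on_plateau_def using le k by (intro exI[of _ k]) auto
    then show False
      using assms(2) by blast
  qed
  moreover have "3 * real k - 1 < 3 * real n * t"
    using k(1) neq by linarith
  ultimately show thesis
    using that by blast
qed

lemma off_plateau_locally_constant:
  assumes "n > 0" "t \<in> {0..1}" "\<not> on_plateau n t"
  shows "\<exists>e>0. \<forall>s. dist s t < e \<longrightarrow> \<not> on_plateau n s \<and> squash n s = squash n t"
proof -
  obtain k where k: "k \<le> n" "3 * real k - 1 < 3 * real n * t" "3 * real n * t < 3 * real k + 1"
    using off_plateau_gap[OF assms(2,3)] .
  define e where "e = min (3 * real n * t - (3 * real k - 1)) (3 * real k + 1 - 3 * real n * t) / (3 * real n)"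
  have "e > 0"
    using k assms(1) by (simp add: e_def)
  moreover have "\<not> on_plateau n s \<and> squash n s = squash n t" if "dist s t < e" for s
  proof -
    have "\<bar>3 * real n * s - 3 * real n * t\<bar> = 3 * real n * \<bar>s - t\<bar>"
      by (simp add: abs_mult flip: right_diff_distrib)
    also have "\<dots> < min (3 * real n * t - (3 * real k - 1)) (3 * real k + 1 - 3 * real n * t)"
      using that assms(1) by (simp add: e_def dist_real_def field_simps)
    finally have s: "3 * real k - 1 < 3 * real n * s" "3 * real n * s < 3 * real k + 1"
      by linarith+
    have "\<not> on_plateau n s"
    proof
      assume "on_plateau n s"
      then obtain j where "3 * real j + 1 \<le> 3 * real n * s" "3 * real n * s \<le> 3 * real j + 2"
        unfolding on_plateau_def by blast
      then have "real j < real k" "\<bar>real j - real k\<bar> < 1"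
        using s by linarith+
      then show False
        using nat_eq_of_abs_diff_less_one by force
    qed
    moreover have "squash n s = squash n t"
      using squash_gap[OF k(1) s] squash_gap[OF k] by simp
    ultimately show ?thesis ..
  qed
  ultimately show ?thesis
    by blast
qed

lemma near_plateau:
  assumes "k < n" "3 * real k + 1 \<le> 3 * real n * t" "3 * real n * t \<le> 3 * real k + 2"
    and "dist s t < 1 / (3 * real n)"
  shows "squash n s \<in> {real k / n..(real k + 1) / n}" and "nat \<lfloor>real n * s\<rfloor> = k"
proof -
  have "\<bar>3 * real n * s - 3 * real n * t\<bar> = 3 * real n * \<bar>s - t\<bar>"
    by (simp add: abs_mult flip: right_diff_distrib)
  also have "\<dots> < 1"
    using assms by (simp add: dist_real_def field_simps)
  finally have s: "real k < real n * s" "real n * s < real k + 1"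
    using assms(2,3) by linarith+
  then show "squash n s \<in> {real k / n..(real k + 1) / n}"
    by (rule squash_in_grid_interval[OF assms(1) less_imp_le less_imp_le])
  have "\<lfloor>real n * s\<rfloor> = int k"
    using s by (simp add: floor_eq_iff)
  then show "nat \<lfloor>real n * s\<rfloor> = k"
    by simp
qed

lemma on_plateau_index:
  assumes "n > 0" "on_plateau n t"
  obtains k where "k < n" "nat \<lfloor>real n * t\<rfloor> = k" "squash n t \<in> {real k / n..(real k + 1) / n}"
proof -
  obtain k where k: "k < n" "3 * real k + 1 \<le> 3 * real n * t" "3 * real n * t \<le> 3 * real k + 2"
    using assms(2) unfolding on_plateau_def by blast
  have "dist t t < 1 / (3 * real n)"
    using assms(1) by simp
  from k(1) near_plateau(2)[OF k this] near_plateau(1)[OF k this] show thesis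
    by (rule that)
qed

definition plateau_loop :: "nat \<Rightarrow> (nat \<Rightarrow> 'a) \<Rightarrow> (real \<Rightarrow> 'a) \<Rightarrow> real \<Rightarrow> 'a" where
  "plateau_loop n C f t = (if on_plateau n t then C (nat \<lfloor>real n * t\<rfloor>) else f (squash n t))"

lemma continuous_map_plateau_loop:
  assumes fin: "finite (topspace X)" and n: "n > 0"
    and f: "\<And>x. x \<in> {0..1} \<Longrightarrow> f x \<in> topspace X"
    and below: "\<And>k x. k < n \<Longrightarrow> x \<in> {real k / n..(real k + 1) / n} \<Longrightarrow> spec_le X (f x) (C k)"
  shows "continuous_map (top_of_set {0..1}) X (plateau_loop n C f)"
  unfolding continuous_map_into_finite_space_iff[OF fin]
proof
  fix t :: real assume t: "t \<in> {0..1}"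
  show "plateau_loop n C f t \<in> topspace X \<and>
    (\<exists>e>0. \<forall>s\<in>{0..1}. dist s t < e \<longrightarrow> spec_le X (plateau_loop n C f s) (plateau_loop n C f t))"
  proof (cases "on_plateau n t")
    case True
    then obtain k where k: "k < n" "3 * real k + 1 \<le> 3 * real n * t" "3 * real n * t \<le> 3 * real k + 2"
      unfolding on_plateau_def by blast
    have "real k / n \<in> {real k / n..(real k + 1) / n}"
      by (auto intro: divide_right_mono)
    from spec_le_topspace[OF below[OF k(1) this]] have Ck: "C k \<in> topspace X"
      by simp
    have "spec_le X (plateau_loop n C f s) (C k)" if "dist s t < 1 / (3 * real n)" for s
      using near_plateau[OF k that] below[OF k(1)] spec_le_refl[OF Ck]
      by (simp add: plateau_loop_def)
    moreover have "plateau_loop n C f t = C k"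
      using near_plateau(2)[OF k, of t] n True by (simp add: plateau_loop_def)
    ultimately show ?thesis
      using Ck n by (intro conjI exI[of _ "1 / (3 * real n)"]) auto
  next
    case False
    obtain e where "e > 0" and e: "\<And>s. dist s t < e \<Longrightarrow> \<not> on_plateau n s \<and> squash n s = squash n t"
      using off_plateau_locally_constant[OF n t False] by blast
    have "squash n t \<in> {0..1}"
      using squash_bounds[of n t] by simp
    then have top: "plateau_loop n C f t \<in> topspace X"
      using f False by (simp add: plateau_loop_def)
    have "spec_le X (plateau_loop n C f s) (plateau_loop n C f t)" if "dist s t < e" for s
      using e[OF that] False spec_le_refl[OF top] by (simp add: plateau_loop_def)
    then show ?thesis
      using \<open>e > 0\<close> top by blast
  qed
qed

lemma plateau_loop_0: "plateau_loop n C f 0 = f 0"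
proof -
  have "\<not> on_plateau n 0"
    by (simp add: on_plateau_def)
  then show ?thesis
    by (simp add: plateau_loop_def squash_0)
qed

lemma plateau_loop_1: "n > 0 \<Longrightarrow> plateau_loop n C f 1 = f 1"
proof -
  assume "n > 0"
  have "\<not> on_plateau n 1"
  proof
    assume "on_plateau n 1"
    then obtain k where "k < n" "3 * real n * 1 \<le> 3 * real k + 2"
      unfolding on_plateau_def by blast
    moreover have "real (Suc k) \<le> real n" if "k < n"
      using that by (simp only: of_nat_le_iff Suc_le_eq)
    ultimately show False
      by simp
  qed
  then show ?thesis
    using \<open>n > 0\<close> by (simp add: plateau_loop_def squash_1)
qed

lemma spec_le_plateau_loop:
  assumes "n > 0" and f: "\<And>x. x \<in> {0..1} \<Longrightarrow> f x \<in> topspace X"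
    and below: "\<And>k x. k < n \<Longrightarrow> x \<in> {real k / n..(real k + 1) / n} \<Longrightarrow> spec_le X (f x) (C k)"
  shows "spec_le X (f (squash n t)) (plateau_loop n C f t)"
proof (cases "on_plateau n t")
  case True
  then obtain k where "k < n" "nat \<lfloor>real n * t\<rfloor> = k" "squash n t \<in> {real k / n..(real k + 1) / n}"
    using on_plateau_index \<open>n > 0\<close> by blast
  then show ?thesis
    using True below by (simp add: plateau_loop_def)
next
  case False
  then show ?thesis
    using f squash_bounds by (simp add: plateau_loop_def spec_le_refl)
qed

lemma plateau_loop_mono:
  assumes "n > 0" and C: "\<And>k. k < n \<Longrightarrow> C k \<in> topspace X"
    and fg: "\<And>x. x \<in> {0..1} \<Longrightarrow> spec_le X (f x) (g x)"
  shows "spec_le X (plateau_loop n C f t) (plateau_loop n C g t)"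
proof (cases "on_plateau n t")
  case True
  then obtain k where k: "k < n" "nat \<lfloor>real n * t\<rfloor> = k"
    using on_plateau_index \<open>n > 0\<close> by blast
  then show ?thesis
    using True spec_le_refl[OF C[OF k(1)]] by (simp add: plateau_loop_def)
next
  case False
  then show ?thesis
    using fg squash_bounds by (simp add: plateau_loop_def)
qed

lemma plateau_loop_in:
  assumes "n > 0" "\<And>k. k < n \<Longrightarrow> C k \<in> Y" "\<And>x. x \<in> {0..1} \<Longrightarrow> f x \<in> Y"
  shows "plateau_loop n C f t \<in> Y"
proof (cases "on_plateau n t")
  case True
  then obtain k where "k < n" "nat \<lfloor>real n * t\<rfloor> = k"
    using on_plateau_index \<open>n > 0\<close> by blast
  then show ?thesis
    using True assms(2) by (simp add: plateau_loop_def)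
next
  case False
  then show ?thesis
    using assms(3) squash_bounds by (simp add: plateau_loop_def)
qed

lemma homotopic_with_plateau_loop:
  assumes fin: "finite (topspace X)" and n: "n > 0" and p: "pathin X \<gamma>"
    and \<gamma>_C: "\<And>k s. k < n \<Longrightarrow> s \<in> {real k / n..(real k + 1) / n} \<Longrightarrow> spec_le X (\<gamma> s) (C k)"
    and g: "\<And>x. x \<in> {0..1} \<Longrightarrow> spec_le X (g x) (\<gamma> x)" and g01: "g 0 = \<gamma> 0" "g 1 = \<gamma> 1"
  shows "homotopic_with (\<lambda>h. h 0 = \<gamma> 0 \<and> h 1 = \<gamma> 1) (top_of_set {0..1}) X \<gamma> (plateau_loop n C g)"
proof -
  let ?I = "top_of_set {0..1::real}"
  let ?P = "\<lambda>h. h 0 = \<gamma> 0 \<and> h 1 = \<gamma> 1"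
  have \<gamma>_top: "\<gamma> x \<in> topspace X" if "x \<in> {0..1}" for x
    using p that by (auto simp: pathin_def continuous_map_def)
  have C_top: "C k \<in> topspace X" if "k < n" for k
  proof -
    have "real k / n \<in> {real k / n..(real k + 1) / n}"
      by (auto intro: divide_right_mono)
    from spec_le_topspace[OF \<gamma>_C[OF that this]] show ?thesis
      by simp
  qed
  have g_top: "g x \<in> topspace X" if "x \<in> {0..1}" for x
    using spec_le_topspace[OF g[OF that]] by simp
  have g_C: "spec_le X (g x) (C k)" if "k < n" "x \<in> {real k / n..(real k + 1) / n}" for k x
  proof -
    have "x \<in> {0..1}"
      using grid_interval_subset that by blast
    then show ?thesis
      using spec_le_trans[OF g \<gamma>_C[OF that]] by simp
  qed
  define r where "r = plateau_loop n C \<gamma>"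
  have cont_r: "continuous_map ?I X r"
    unfolding r_def using fin n \<gamma>_top \<gamma>_C by (rule continuous_map_plateau_loop)
  have cont_g: "continuous_map ?I X (plateau_loop n C g)"
    using fin n g_top g_C by (rule continuous_map_plateau_loop)
  have ends: "?P r" "?P (plateau_loop n C g)" "?P (\<gamma> \<circ> squash n)"
    using n g01 by (simp_all add: r_def plateau_loop_0 plateau_loop_1 squash_0 squash_1)
  have "homotopic_with ?P ?I X \<gamma> (\<gamma> \<circ> squash n)"
    using homotopic_with_reparametrize[OF p continuous_on_squash _ squash_0 squash_1[OF n]]
      squash_bounds by (auto simp: image_subset_iff)
  moreover have "homotopic_with ?P ?I X (\<gamma> \<circ> squash n) r"
  proof (rule homotopic_with_spec_le)
    show "spec_le X ((\<gamma> \<circ> squash n) t) (r t)" for t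
      unfolding r_def o_def using n \<gamma>_top \<gamma>_C by (rule spec_le_plateau_loop)
  qed (use homotopic_with_imp_continuous_maps[OF calculation] cont_r ends in auto)
  moreover have "homotopic_with ?P ?I X (plateau_loop n C g) r"
  proof (rule homotopic_with_spec_le)
    show "spec_le X (plateau_loop n C g t) (r t)" for t
      unfolding r_def using n C_top g by (rule plateau_loop_mono)
  qed (use cont_g cont_r ends in auto)
  ultimately show ?thesis
    by (meson homotopic_with_trans homotopic_with_symD)
qed

lemma loop_homotopic_into_subtopology:
  assumes fin: "finite (topspace X)" and "y \<in> Y"
    and below: "\<And>x. x \<in> topspace X \<Longrightarrow> \<exists>a\<in>Y. spec_le X a x"
    and above: "\<And>x. x \<in> topspace X \<Longrightarrow> \<exists>m\<in>Y. spec_le X x m"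
    and \<gamma>: "loopin X y \<gamma>"
  shows "\<exists>\<epsilon>. loopin (subtopology X Y) y \<epsilon> \<and> loop_homotopic X y \<gamma> \<epsilon>"
proof -
  have p: "pathin X \<gamma>" and \<gamma>01: "\<gamma> 0 = y" "\<gamma> 1 = y"
    using \<gamma> by (auto simp: loopin_def)
  have \<gamma>_top: "\<gamma> x \<in> topspace X" if "x \<in> {0..1}" for x
    using p that by (auto simp: pathin_def continuous_map_def)
  obtain n where n: "n > 0"
    and "\<And>k. k < n \<Longrightarrow> \<exists>m\<in>Y. \<forall>s\<in>{real k / n..(real k + 1) / n}. spec_le X (\<gamma> s) m"
    using finite_space_path_grid[OF fin p above] by blast
  then obtain C where C: "\<And>k. k < n \<Longrightarrow> C k \<in> Y"
    and \<gamma>_C: "\<And>k s. k < n \<Longrightarrow> s \<in> {real k / n..(real k + 1) / n} \<Longrightarrow> spec_le X (\<gamma> s) (C k)"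
    by metis
  define low where "low x = (if x = y then y else SOME a. a \<in> Y \<and> spec_le X a x)" for x
  have low: "low x \<in> Y" "spec_le X (low x) x" if "x \<in> topspace X" for x
    using someI_ex[OF below[OF that, unfolded Bex_def]] that \<open>y \<in> Y\<close>
    by (auto simp: low_def spec_le_refl)
  have low_y: "low y = y"
    by (simp add: low_def)
  define \<epsilon> where "\<epsilon> = plateau_loop n C (low \<circ> \<gamma>)"
  have "homotopic_with (\<lambda>h. h 0 = \<gamma> 0 \<and> h 1 = \<gamma> 1) (top_of_set {0..1}) X \<gamma> \<epsilon>"
    unfolding \<epsilon>_def using fin n p \<gamma>_C
    by (rule homotopic_with_plateau_loop) (simp_all add: low(2) \<gamma>_top \<gamma>01 low_y)
  then have hom: "homotopic_with (\<lambda>h. h 0 = y \<and> h 1 = y) (top_of_set {0..1}) X \<gamma> \<epsilon>"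
    by (simp add: \<gamma>01)
  then have "loopin X y \<epsilon>"
    using homotopic_with_imp_continuous_maps[OF hom] homotopic_with_imp_property[OF hom]
    by (simp add: loopin_def pathin_def)
  moreover have "\<epsilon> t \<in> Y" for t
  proof -
    have "(low \<circ> \<gamma>) x \<in> Y" if "x \<in> {0..1}" for x
      using low(1)[OF \<gamma>_top[OF that]] by simp
    with n C show ?thesis
      unfolding \<epsilon>_def by (rule plateau_loop_in)
  qed
  ultimately show ?thesis
    using \<gamma> hom by (auto simp: loop_homotopic_def loopin_subtopology)
qed

section \<open>Extremal points\<close>

definition spec_minimal :: "'a topology \<Rightarrow> 'a \<Rightarrow> bool" where
  "spec_minimal X a \<longleftrightarrow> a \<in> topspace X \<and> (\<forall>z. spec_le X z a \<longrightarrow> spec_le X a z)"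

definition spec_maximal :: "'a topology \<Rightarrow> 'a \<Rightarrow> bool" where
  "spec_maximal X a \<longleftrightarrow> a \<in> topspace X \<and> (\<forall>z. spec_le X a z \<longrightarrow> spec_le X z a)"

lemma spec_minimalD: "spec_minimal X a \<Longrightarrow> spec_le X z a \<Longrightarrow> spec_le X a z"
  by (simp add: spec_minimal_def)

lemma spec_maximalD: "spec_maximal X a \<Longrightarrow> spec_le X a z \<Longrightarrow> spec_le X z a"
  by (simp add: spec_maximal_def)

lemma finite_space_minimal_below:
  assumes "finite (topspace X)" "x \<in> topspace X"
  obtains a where "spec_minimal X a" "spec_le X a x"
proof -
  let ?R = "\<lambda>a b. spec_le X a b \<and> \<not> spec_le X b a"
  have "asymp_on (topspace X) ?R" "transp_on (topspace X) ?R"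
    unfolding asymp_on_def transp_on_def by (blast, meson spec_le_trans)
  then have "\<exists>a\<in>topspace X. spec_le X a x \<and> (\<forall>z\<in>topspace X. ?R z a \<longrightarrow> \<not> spec_le X z x)"
    using assms spec_le_refl[OF assms(2)] by (intro Finite_Set.bex_min_element_with_property) auto
  then obtain a where a: "a \<in> topspace X" "spec_le X a x"
    and min: "\<And>z. z \<in> topspace X \<Longrightarrow> ?R z a \<Longrightarrow> \<not> spec_le X z x"
    by blast
  have "spec_le X a z" if "spec_le X z a" for z
    using min[OF conjunct1[OF spec_le_topspace[OF that]]] that spec_le_trans[OF that a(2)] by blast
  then have "spec_minimal X a"
    using a(1) by (simp add: spec_minimal_def)
  then show thesis
    using a(2) by (rule that)
qed

lemma finite_space_maximal_above:
  assumes "finite (topspace X)" "x \<in> topspace X"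
  obtains a where "spec_maximal X a" "spec_le X x a"
proof -
  let ?R = "\<lambda>a b. spec_le X a b \<and> \<not> spec_le X b a"
  have "asymp_on (topspace X) ?R" "transp_on (topspace X) ?R"
    unfolding asymp_on_def transp_on_def by (blast, meson spec_le_trans)
  then have "\<exists>a\<in>topspace X. spec_le X x a \<and> (\<forall>z\<in>topspace X. ?R a z \<longrightarrow> \<not> spec_le X x z)"
    using assms spec_le_refl[OF assms(2)] by (intro Finite_Set.bex_max_element_with_property) auto
  then obtain a where a: "a \<in> topspace X" "spec_le X x a"
    and max: "\<And>z. z \<in> topspace X \<Longrightarrow> ?R a z \<Longrightarrow> \<not> spec_le X x z"
    by blast
  have "spec_le X z a" if "spec_le X a z" for z
    using max[OF conjunct2[OF spec_le_topspace[OF that]]] that spec_le_trans[OF a(2) that] by blast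
  then have "spec_maximal X a"
    using a(1) by (simp add: spec_maximal_def)
  then show thesis
    using a(2) by (rule that)
qed

definition spec_rep :: "'a topology \<Rightarrow> 'a \<Rightarrow> 'a" where
  "spec_rep X a = (SOME b. spec_le X b a \<and> spec_le X a b)"

text \<open>Keeping a single representative of each class of the specialization preorder is what makes
  the subspace of extremal points \<open>T\<^sub>0\<close>.\<close>
definition extremal_points :: "'a topology \<Rightarrow> 'a set" where
  "extremal_points X = {a. (spec_minimal X a \<or> spec_maximal X a) \<and> spec_rep X a = a}"

lemma spec_rep_equiv:
  assumes "a \<in> topspace X"
  shows "spec_le X (spec_rep X a) a" "spec_le X a (spec_rep X a)"
  using someI[of "\<lambda>b. spec_le X b a \<and> spec_le X a b" a] assms
  by (simp_all add: spec_rep_def spec_le_refl)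

lemma spec_rep_cong:
  assumes "spec_le X a b" "spec_le X b a"
  shows "spec_rep X a = spec_rep X b"
proof -
  have "spec_le X c a \<and> spec_le X a c \<longleftrightarrow> spec_le X c b \<and> spec_le X b c" for c
    using assms spec_le_trans by meson
  then show ?thesis
    by (simp add: spec_rep_def)
qed

lemma spec_minimal_cong:
  assumes ab: "spec_le X a b" and ba: "spec_le X b a" and a: "spec_minimal X a"
  shows "spec_minimal X b"
  unfolding spec_minimal_def
proof (intro conjI allI impI)
  show "b \<in> topspace X"
    using spec_le_topspace[OF ab] by simp
  fix z assume "spec_le X z b"
  then have "spec_le X a z"
    using a spec_le_trans[OF _ ba] by (simp add: spec_minimal_def)
  then show "spec_le X b z"
    by (rule spec_le_trans[OF ba])
qed

lemma spec_maximal_cong: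
  assumes ab: "spec_le X a b" and ba: "spec_le X b a" and a: "spec_maximal X a"
  shows "spec_maximal X b"
  unfolding spec_maximal_def
proof (intro conjI allI impI)
  show "b \<in> topspace X"
    using spec_le_topspace[OF ab] by simp
  fix z assume "spec_le X b z"
  then have "spec_le X z a"
    using a spec_le_trans[OF ab] by (simp add: spec_maximal_def)
  then show "spec_le X z b"
    using ab by (rule spec_le_trans)
qed

lemma extremal_points_subset: "extremal_points X \<subseteq> topspace X"
  by (auto simp: extremal_points_def spec_minimal_def spec_maximal_def)

lemma extremal_points_antisym:
  assumes "a \<in> extremal_points X" "b \<in> extremal_points X" "spec_le X a b" "spec_le X b a"
  shows "a = b"
  using assms spec_rep_cong[OF assms(3,4)] by (simp add: extremal_points_def)

lemma spec_rep_in_extremal_points: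
  assumes "spec_minimal X a \<or> spec_maximal X a"
  shows "spec_rep X a \<in> extremal_points X"
proof -
  have "a \<in> topspace X"
    using assms by (auto simp: spec_minimal_def spec_maximal_def)
  then have equiv: "spec_le X (spec_rep X a) a" "spec_le X a (spec_rep X a)"
    by (rule spec_rep_equiv)+
  then have "spec_minimal X (spec_rep X a) \<or> spec_maximal X (spec_rep X a)"
    using assms spec_minimal_cong[OF equiv(2,1)] spec_maximal_cong[OF equiv(2,1)] by (elim disjE) simp_all
  moreover have "spec_rep X (spec_rep X a) = spec_rep X a"
    using spec_rep_cong[OF equiv] by simp
  ultimately show ?thesis
    by (simp add: extremal_points_def)
qed

lemma extremal_point_below:
  assumes "finite (topspace X)" "x \<in> topspace X"
  shows "\<exists>a\<in>extremal_points X. spec_le X a x"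
proof -
  obtain a where a: "spec_minimal X a" "spec_le X a x"
    using finite_space_minimal_below[OF assms] .
  then have "spec_le X (spec_rep X a) x"
    using spec_rep_equiv(1)[of a X] spec_le_trans[OF _ a(2)] by (simp add: spec_minimal_def)
  moreover have "spec_rep X a \<in> extremal_points X"
    using a(1) by (simp add: spec_rep_in_extremal_points)
  ultimately show ?thesis
    by blast
qed

lemma extremal_point_above:
  assumes "finite (topspace X)" "x \<in> topspace X"
  shows "\<exists>a\<in>extremal_points X. spec_le X x a"
proof -
  obtain a where a: "spec_maximal X a" "spec_le X x a"
    using finite_space_maximal_above[OF assms] .
  then have "spec_le X x (spec_rep X a)"
    using spec_rep_equiv(2)[of a X] spec_le_trans[OF a(2)] by (simp add: spec_maximal_def)
  moreover have "spec_rep X a \<in> extremal_points X"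
    using a(1) by (simp add: spec_rep_in_extremal_points)
  ultimately show ?thesis
    by blast
qed

lemma t0_space_extremal_points: "t0_space (subtopology X (extremal_points X))"
  unfolding t0_space_iff_spec_le_antisym
proof (intro allI impI)
  fix a b
  assume ab: "spec_le (subtopology X (extremal_points X)) a b"
    and ba: "spec_le (subtopology X (extremal_points X)) b a"
  have E: "a \<in> extremal_points X" "b \<in> extremal_points X"
    using spec_le_topspace[OF ab] by auto
  show "a = b"
    using extremal_points_antisym[OF E] ab ba
    unfolding spec_le_subtopology[OF E] spec_le_subtopology[OF E(2,1)] by blast
qed

lemma extremal_points_comparable_eq:
  assumes "a \<in> extremal_points X" "b \<in> extremal_points X" "spec_le X a b \<or> spec_le X b a"
    and "spec_minimal X a \<and> spec_minimal X b \<or> spec_maximal X a \<and> spec_maximal X b"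
  shows "a = b"
proof -
  from assms(3,4) have "spec_le X a b" "spec_le X b a"
    by (metis spec_minimalD spec_maximalD)+
  with assms(1,2) show ?thesis
    by (rule extremal_points_antisym)
qed

lemma height_le_extremal_points:
  assumes "finite (topspace X)"
  shows "height_le (subtopology X (extremal_points X)) 2"
  unfolding height_le_def
proof (intro allI impI)
  let ?E = "extremal_points X"
  fix C assume C: "spec_chain (subtopology X ?E) C"
  then have CE: "C \<subseteq> ?E"
    by (auto simp: spec_chain_def)
  have finC: "finite C"
    by (rule finite_subset[OF subset_trans[OF CE extremal_points_subset] assms])
  have comp: "spec_le X a b \<or> spec_le X b a" if "a \<in> C" "b \<in> C" for a b
  proof -
    have "spec_le (subtopology X ?E) a b \<or> spec_le (subtopology X ?E) b a"
      using C that unfolding spec_chain_def by blast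
    moreover have ab: "a \<in> ?E" "b \<in> ?E"
      using CE that by auto
    ultimately show ?thesis
      unfolding spec_le_subtopology[OF ab] spec_le_subtopology[OF ab(2,1)] by blast
  qed
  have one: "card (C \<inter> Collect P) \<le> 1" if "P = spec_minimal X \<or> P = spec_maximal X" for P
    unfolding One_nat_def card_le_Suc0_iff_eq[OF finite_Int[OF disjI1[OF finC]]]
  proof (intro ballI)
    fix a b assume "a \<in> C \<inter> Collect P" "b \<in> C \<inter> Collect P"
    then show "a = b"
      using CE comp[of a b] that by (intro extremal_points_comparable_eq) auto
  qed
  have "(C \<inter> Collect (spec_minimal X)) \<union> (C \<inter> Collect (spec_maximal X)) = C"
    using CE unfolding extremal_points_def by blast
  with card_Un_le[of "C \<inter> Collect (spec_minimal X)" "C \<inter> Collect (spec_maximal X)"]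
  have "card C \<le> card (C \<inter> Collect (spec_minimal X)) + card (C \<inter> Collect (spec_maximal X))"
    by (simp only:)
  then show "finite C \<and> card C \<le> 2"
    using finC one[of "spec_minimal X"] one[of "spec_maximal X"] by simp
qed

theorem mainTheorem14:
  fixes X :: "'a topology"
  assumes "finite (topspace X)"
    and "topspace X \<noteq> {}"
    and "connected_space X"
  shows "\<exists>S y h. S \<subseteq> topspace X \<and>
           connected_space (subtopology X S) \<and>
           t0_space (subtopology X S) \<and>
           height_le (subtopology X S) 2 \<and>
           y \<in> S \<and>
           h \<in> hom (fundamental_group (subtopology X S) y) (fundamental_group X y) \<and>
           h ` carrier (fundamental_group (subtopology X S) y) = carrier (fundamental_group X y)"
proof -
  let ?E = "extremal_points X"
  note below = extremal_point_below[OF assms(1)] and above = extremal_point_above[OF assms(1)]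
  obtain y where y: "y \<in> ?E"
    using assms(2) below by blast
  have "\<exists>\<epsilon>. loopin (subtopology X ?E) y \<epsilon> \<and> loop_homotopic X y \<gamma> \<epsilon>" if "loopin X y \<gamma>" for \<gamma>
    by (rule loop_homotopic_into_subtopology[OF assms(1) y below above that])
  then have "induced_inclusion X y ` carrier (fundamental_group (subtopology X ?E) y) =
      carrier (fundamental_group X y)"
    by (rule induced_inclusion_surjective)
  moreover have "connected_space (subtopology X ?E)"
    using assms(1,3) below above by (rule connected_space_subtopology_coinitial_cofinal)
  ultimately show ?thesis
    using extremal_points_subset[of X] t0_space_extremal_points[of X]
      height_le_extremal_points[OF assms(1)] y induced_inclusion_hom[of X y ?E]
    by (intro exI[of _ ?E] exI[of _ y] exI[of _ "induced_inclusion X y"]) simp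
qed

end
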